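(* Let $\overline X$ be a compact Hausdorff space, and let $\partial_L,\partial_R\subset\overline X$ be disjoint closed subspaces. Write $\partial\overline X:=\partial_L\cup\partial_R$ and $X:=\overline X\setminus\partial\overline X$. Then the two pointed extensions of $X$ \[ X_\ast:=\ast\amalg_{\partial_L}(\overline X\setminus\partial_R)\qquad\text{and}\qquad \ast\amalg_{\partial_R}(\overline X\setminus\partial_L) \] are both well-pointed, and each is the negation of the other.
   Context: A pointed extension of a locally compact Hausdorff space $X$ is a compactly generated Hausdorff topology on $\ast\amalg X$ extending that of $X$; they form a poset with $X_\ast\le X'_\ast$ iff the identity map is continuous, with initial object $X_+$ and final object $X^+$ (one-point compactification). The negation $X_\ast^\neg$ is the final pointed extension $X'_\ast$ for which the natural map $X_+\to X_\ast\times_{X^+}X'_\ast$ is a homeomorphism. $X_\ast$ is well-pointed if the canonical relation $X_\ast\to X_\ast^{\neg\neg}$ is a homeomorphism. Here $\ast\amalg_{\partial_L}(\overline X\setminus\partial_R)$ denotes the quotient collapsing $\partial_L$ to the point $\ast$. *)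

theory Defs
  imports "HOL-Analysis.Analysis"
begin

text \<open>The pointed set  * \<amalg> X  is modelled on the type 'a option: None is the
  base point *, and Some x is the point x of X.\<close>

definition pt_carrier :: "'a topology \<Rightarrow> 'a option set" where
  "pt_carrier X = insert None (Some ` topspace X)"

definition pointed_extension :: "'a topology \<Rightarrow> 'a option topology \<Rightarrow> bool" where
  "pointed_extension X T \<longleftrightarrow>
     topspace T = pt_carrier X \<and> Hausdorff_space T \<and> k_space T \<and>
     homeomorphic_map X (subtopology T (Some ` topspace X)) Some"

definition pe_le :: "'a option topology \<Rightarrow> 'a option topology \<Rightarrow> bool" where
  "pe_le T T' \<longleftrightarrow> continuous_map T T' id"

text \<open>The initial pointed extension X_+ (base point isolated).\<close>

definition pe_plus :: "'a topology \<Rightarrow> 'a option topology" where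
  "pe_plus X = topology (\<lambda>U. U \<subseteq> pt_carrier X \<and> openin X {x. Some x \<in> U})"

text \<open>The fibre product X_* \<times>_{X^+} X'_* in the category of compactly generated
  Hausdorff spaces: k-ification of the subspace {(p,p)} of the product.\<close>

definition pe_fibre_product :: "'a topology \<Rightarrow> 'a option topology \<Rightarrow> 'a option topology
    \<Rightarrow> ('a option \<times> 'a option) topology" where
  "pe_fibre_product X T T' =
     kification (subtopology (prod_topology T T') {(p, p) | p. p \<in> pt_carrier X})"

definition pe_disjoint :: "'a topology \<Rightarrow> 'a option topology \<Rightarrow> 'a option topology \<Rightarrow> bool" where
  "pe_disjoint X T T' \<longleftrightarrow>
     homeomorphic_map (pe_plus X) (pe_fibre_product X T T') (\<lambda>p. (p, p))"

definition is_negation :: "'a topology \<Rightarrow> 'a option topology \<Rightarrow> 'a option topology \<Rightarrow> bool" where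
  "is_negation X T N \<longleftrightarrow>
     pointed_extension X N \<and> pe_disjoint X T N \<and>
     (\<forall>N'. pointed_extension X N' \<and> pe_disjoint X T N' \<longrightarrow> pe_le N' N)"

definition pe_neg :: "'a topology \<Rightarrow> 'a option topology \<Rightarrow> 'a option topology" where
  "pe_neg X T = (THE N. is_negation X T N)"

definition well_pointed :: "'a topology \<Rightarrow> 'a option topology \<Rightarrow> bool" where
  "well_pointed X T \<longleftrightarrow>
     pointed_extension X T \<and> (\<exists>N. is_negation X T N) \<and>
     (\<exists>NN. is_negation X (pe_neg X T) NN) \<and>
     homeomorphic_map T (pe_neg X (pe_neg X T)) id"

text \<open>The quotient  * \<amalg>_L (Xbar \ R): collapse L to the base point.\<close>

definition collapse_quot :: "'a topology \<Rightarrow> 'a set \<Rightarrow> 'a set \<Rightarrow> 'a option topology" where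
  "collapse_quot Xb L R = topology (\<lambda>U.
     U \<subseteq> insert None (Some ` (topspace Xb - R - L)) \<and>
     openin (subtopology Xb (topspace Xb - R))
       {x \<in> topspace Xb - R. (if x \<in> L then None else Some x) \<in> U})"

end

theory Submission
  imports Defs
begin

text \<open>Collapsing L makes the neighbourhoods of the base point those of L. As L and R have
  disjoint neighbourhoods in the normal space Xb, the two collapses have base-point
  neighbourhoods meeting only in the base point, and this forces their fibre product over
  X^+ to be X_+. For maximality let N be disjoint from the L-collapse. A closed set C of the
  R-collapse avoiding the base point misses a neighbourhood of R, so C together with the base
  point is compact in the L-collapse. Disjointness makes the base point isolated in the fibre
  product, so for every compact K of N the compact slice of the diagonal over
  (C \<union> {*}) \<times> K stays compact when the base point is removed; its projection K \<inter> C is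
  therefore compact, hence closed, and as N is compactly generated C is closed in N. So the
  R-collapse is the negation of the L-collapse and vice versa; negations being unique, each
  collapse is its own double negation.\<close>

section \<open>Pointed extensions\<close>

lemma istopology_preimage_open:
  "istopology (\<lambda>U. U \<subseteq> S \<and> openin Y {x \<in> A. f x \<in> U})"
  unfolding istopology_def
proof (rule conjI; intro allI impI)
  fix U V
  assume "U \<subseteq> S \<and> openin Y {x \<in> A. f x \<in> U}" "V \<subseteq> S \<and> openin Y {x \<in> A. f x \<in> V}"
  moreover have "{x \<in> A. f x \<in> U \<inter> V} = {x \<in> A. f x \<in> U} \<inter> {x \<in> A. f x \<in> V}"
    by blast
  ultimately show "U \<inter> V \<subseteq> S \<and> openin Y {x \<in> A. f x \<in> U \<inter> V}"
    by (simp only:) blast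
next
  fix \<K>
  assume "\<forall>U\<in>\<K>. U \<subseteq> S \<and> openin Y {x \<in> A. f x \<in> U}"
  moreover have "{x \<in> A. f x \<in> \<Union>\<K>} = (\<Union>U\<in>\<K>. {x \<in> A. f x \<in> U})"
    by blast
  ultimately show "\<Union>\<K> \<subseteq> S \<and> openin Y {x \<in> A. f x \<in> \<Union>\<K>}"
    by (simp only:) blast
qed

lemma openin_pe_plus:
  "openin (pe_plus X) U \<longleftrightarrow> U \<subseteq> pt_carrier X \<and> openin X {x. Some x \<in> U}"
  using istopology_preimage_open[of "pt_carrier X" X UNIV Some]
  unfolding pe_plus_def by simp

lemma topspace_pe_plus [simp]: "topspace (pe_plus X) = pt_carrier X"
proof (rule antisym)
  show "topspace (pe_plus X) \<subseteq> pt_carrier X"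
    using openin_pe_plus[of X "topspace (pe_plus X)"] by simp
  have "{x. Some x \<in> pt_carrier X} = topspace X"
    by (auto simp: pt_carrier_def)
  then have "openin (pe_plus X) (pt_carrier X)"
    by (simp add: openin_pe_plus)
  then show "pt_carrier X \<subseteq> topspace (pe_plus X)"
    by (rule openin_subset)
qed

lemma pointed_extension_topspace:
  "pointed_extension X T \<Longrightarrow> topspace T = pt_carrier X"
  by (simp add: pointed_extension_def)

lemma pointed_extension_Hausdorff_base:
  assumes "pointed_extension X T"
  shows "Hausdorff_space X"
proof -
  have "X homeomorphic_space subtopology T (Some ` topspace X)"
    using assms homeomorphic_map_imp_homeomorphic_space by (auto simp: pointed_extension_def)
  moreover have "Hausdorff_space (subtopology T (Some ` topspace X))"
    using assms by (simp add: pointed_extension_def Hausdorff_space_subtopology)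
  ultimately show ?thesis
    using homeomorphic_Hausdorff_space by blast
qed

lemma openin_pointed_extension_Some_iff:
  assumes T: "pointed_extension X T"
  shows "openin T (Some ` V) \<longleftrightarrow> openin X V"
proof -
  have hom: "homeomorphic_map X (subtopology T (Some ` topspace X)) Some"
    using T by (simp add: pointed_extension_def)
  have "closedin T {None}"
    using T by (simp add: pointed_extension_def pt_carrier_def closedin_Hausdorff_singleton)
  moreover have "topspace T - {None} = Some ` topspace X"
    using T by (auto simp: pointed_extension_def pt_carrier_def)
  ultimately have open_X: "openin T (Some ` topspace X)"
    by (metis closedin_def)
  show ?thesis
  proof
    assume "openin T (Some ` V)"
    then have "Some ` V \<subseteq> Some ` topspace X"
      using T openin_subset by (fastforce simp: pointed_extension_def pt_carrier_def)
    then show "openin X V"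
      using \<open>openin T (Some ` V)\<close> hom homeomorphic_map_openness_eq open_X
      by (metis inj_image_subset_iff option.inject inj_onI openin_open_subtopology)
  next
    assume "openin X V"
    then show "openin T (Some ` V)"
      using hom open_X homeomorphic_map_openness_eq openin_trans_full by blast
  qed
qed

lemma openin_pointed_extension_preimage:
  assumes T: "pointed_extension X T" and U: "openin T U"
  shows "openin X {x. Some x \<in> U}"
proof -
  have "Some ` {x. Some x \<in> U} = U \<inter> (topspace T - {None})"
    using T openin_subset[OF U] by (auto simp: pointed_extension_def pt_carrier_def)
  moreover have "closedin T {None}"
    using T by (simp add: pointed_extension_def pt_carrier_def closedin_Hausdorff_singleton)
  ultimately have "openin T (Some ` {x. Some x \<in> U})"
    using U by (simp add: openin_Int openin_diff)
  then show ?thesis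
    using T openin_pointed_extension_Some_iff by blast
qed

lemma openin_pointed_extension_transfer:
  assumes T: "pointed_extension X T" and T': "pointed_extension X T'"
    and U: "openin T U" and "None \<notin> U"
  shows "openin T' U"
proof -
  have "U = Some ` {x. Some x \<in> U}"
    using \<open>None \<notin> U\<close> by (auto simp: image_iff) (metis option.exhaust)
  then show ?thesis
    using openin_pointed_extension_preimage[OF T U] openin_pointed_extension_Some_iff[OF T']
    by metis
qed

lemma continuous_map_pe_plus_id:
  assumes T: "pointed_extension X T"
  shows "continuous_map (pe_plus X) T id"
  unfolding continuous_map_def
proof (intro conjI allI impI)
  show "id \<in> topspace (pe_plus X) \<rightarrow> topspace T"
    using T by (simp add: pointed_extension_topspace)
  fix U
  assume U: "openin T U"
  then have "U \<subseteq> pt_carrier X"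
    using T openin_subset pointed_extension_topspace by metis
  then have "{x \<in> topspace (pe_plus X). id x \<in> U} = U"
    by auto
  then show "openin (pe_plus X) {x \<in> topspace (pe_plus X). id x \<in> U}"
    using \<open>U \<subseteq> pt_carrier X\<close> openin_pointed_extension_preimage[OF T U]
    by (simp add: openin_pe_plus)
qed

lemma continuous_map_Some_pe_plus: "continuous_map X (pe_plus X) Some"
  unfolding continuous_map_def
proof (intro conjI allI impI)
  show "Some \<in> topspace X \<rightarrow> topspace (pe_plus X)"
    by (auto simp: pt_carrier_def)
  fix U
  assume "openin (pe_plus X) U"
  moreover from this have "{x \<in> topspace X. Some x \<in> U} = {x. Some x \<in> U}"
    by (auto simp: openin_pe_plus pt_carrier_def)
  ultimately show "openin X {x \<in> topspace X. Some x \<in> U}"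
    by (simp add: openin_pe_plus)
qed

lemma locally_compact_space_pointed:
  assumes X: "locally_compact_space X" and top: "topspace T = pt_carrier X"
    and cont: "continuous_map X T Some" and opn: "\<And>U. openin X U \<Longrightarrow> openin T (Some ` U)"
    and base: "\<exists>U K. openin T U \<and> compactin T K \<and> None \<in> U \<and> U \<subseteq> K"
  shows "locally_compact_space T"
  unfolding locally_compact_space_def
proof
  fix p
  assume p: "p \<in> topspace T"
  show "\<exists>U K. openin T U \<and> compactin T K \<and> p \<in> U \<and> U \<subseteq> K"
  proof (cases p)
    case None
    then show ?thesis
      using base by blast
  next
    case (Some b)
    then obtain U K where UK: "openin X U" "compactin X K" "b \<in> U" "U \<subseteq> K"
      using X p top unfolding locally_compact_space_def by (auto simp: pt_carrier_def)
    then have "openin T (Some ` U)" "compactin T (Some ` K)"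
      using opn cont image_compactin by blast+
    then show ?thesis
      using UK(3,4) Some by blast
  qed
qed

lemma locally_compact_space_pe_plus:
  assumes "locally_compact_space X"
  shows "locally_compact_space (pe_plus X)"
proof (rule locally_compact_space_pointed[OF assms topspace_pe_plus continuous_map_Some_pe_plus])
  show "openin (pe_plus X) (Some ` U)" if "openin X U" for U
  proof -
    have "{x. Some x \<in> Some ` U} = U"
      by auto
    then show ?thesis
      using that openin_subset[OF that] by (auto simp: openin_pe_plus pt_carrier_def)
  qed
  have "openin (pe_plus X) {None}" "compactin (pe_plus X) {None}"
    by (simp_all add: openin_pe_plus pt_carrier_def)
  then show "\<exists>U K. openin (pe_plus X) U \<and> compactin (pe_plus X) K \<and> None \<in> U \<and> U \<subseteq> K"
    by blast
qed

section \<open>Separating points\<close>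

text \<open>What is needed to separate points in two extensions at once; collapse quotients have
  these properties before they are known to be Hausdorff.\<close>

definition pointed_open_extension :: "'a topology \<Rightarrow> 'a option topology \<Rightarrow> bool" where
  "pointed_open_extension X T \<longleftrightarrow> topspace T = pt_carrier X \<and>
     (\<forall>U. openin X U \<longrightarrow> openin T (Some ` U)) \<and>
     (\<forall>K. compactin X K \<longrightarrow> closedin T (Some ` K))"

lemma pointed_extension_imp_pointed_open_extension:
  assumes T: "pointed_extension X T"
  shows "pointed_open_extension X T"
  unfolding pointed_open_extension_def
proof (intro conjI allI impI)
  show "topspace T = pt_carrier X"
    using T by (rule pointed_extension_topspace)
  show "openin T (Some ` U)" if "openin X U" for U
    using that T openin_pointed_extension_Some_iff by blast
  have "continuous_map X T Some"
    using T homeomorphic_imp_continuous_map continuous_map_in_subtopology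
    unfolding pointed_extension_def by blast
  then show "closedin T (Some ` K)" if "compactin X K" for K
    using that T image_compactin compactin_imp_closedin
    unfolding pointed_extension_def by blast
qed

lemma pointed_open_extension_separates_base:
  assumes T1: "pointed_open_extension X T1" and T2: "pointed_open_extension X T2"
    and X: "locally_compact_space X" and b: "b \<in> topspace X"
  shows "\<exists>U V. openin T1 U \<and> openin T2 V \<and> None \<in> U \<and> Some b \<in> V \<and> disjnt U V"
proof -
  obtain U K where UK: "openin X U" "compactin X K" "b \<in> U" "U \<subseteq> K"
    using X b unfolding locally_compact_space_def by blast
  have "closedin T1 (Some ` K)"
    using T1 UK(2) by (simp add: pointed_open_extension_def)
  then have "openin T1 (topspace T1 - Some ` K)"
    by (simp add: openin_diff)
  moreover have "None \<in> topspace T1 - Some ` K"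
    using T1 by (auto simp: pointed_open_extension_def pt_carrier_def)
  moreover have "openin T2 (Some ` U)"
    using T2 UK(1) by (simp add: pointed_open_extension_def)
  moreover have "disjnt (topspace T1 - Some ` K) (Some ` U)"
    using UK(4) by (auto simp: disjnt_def)
  ultimately show ?thesis
    using UK(3) by blast
qed

lemma pointed_open_extension_separates:
  assumes T1: "pointed_open_extension X T1" and T2: "pointed_open_extension X T2"
    and X: "locally_compact_space X" "Hausdorff_space X"
    and p: "p \<in> pt_carrier X" and q: "q \<in> pt_carrier X" and "p \<noteq> q"
  shows "\<exists>U V. openin T1 U \<and> openin T2 V \<and> p \<in> U \<and> q \<in> V \<and> disjnt U V"
proof (cases p; cases q)
  fix b
  assume "p = None" "q = Some b"
  moreover from this have "b \<in> topspace X"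
    using q by (auto simp: pt_carrier_def)
  ultimately show ?thesis
    using pointed_open_extension_separates_base[OF T1 T2 X(1)] by blast
next
  fix a
  assume "p = Some a" "q = None"
  moreover from this have "a \<in> topspace X"
    using p by (auto simp: pt_carrier_def)
  then obtain V U where "openin T2 V" "openin T1 U" "None \<in> V" "Some a \<in> U" "disjnt V U"
    using pointed_open_extension_separates_base[OF T2 T1 X(1)] by blast
  ultimately show ?thesis
    using disjnt_sym by blast
next
  fix a b
  assume ab: "p = Some a" "q = Some b"
  then have "a \<in> topspace X" "b \<in> topspace X" "a \<noteq> b"
    using p q \<open>p \<noteq> q\<close> by (auto simp: pt_carrier_def)
  then obtain U V where "openin X U" "openin X V" "a \<in> U" "b \<in> V" "disjnt U V"
    using X(2) unfolding Hausdorff_space_def by blast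
  moreover have "openin T1 (Some ` U)" "openin T2 (Some ` V)"
    using T1 T2 \<open>openin X U\<close> \<open>openin X V\<close> by (simp_all add: pointed_open_extension_def)
  moreover have "disjnt (Some ` U) (Some ` V)"
    using \<open>disjnt U V\<close> by (auto simp: disjnt_def)
  ultimately show ?thesis
    using ab by blast
qed (use \<open>p \<noteq> q\<close> in simp)

lemma Hausdorff_space_pointed_open_extension:
  assumes T: "pointed_open_extension X T" and X: "locally_compact_space X" "Hausdorff_space X"
  shows "Hausdorff_space T"
proof -
  have "topspace T = pt_carrier X"
    using T by (simp add: pointed_open_extension_def)
  then show ?thesis
    unfolding Hausdorff_space_def using pointed_open_extension_separates[OF T T X] by simp
qed

section \<open>Fibre products and negations\<close>

definition pt_diagonal :: "'a topology \<Rightarrow> ('a option \<times> 'a option) set" where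
  "pt_diagonal X = {(p, p) | p. p \<in> pt_carrier X}"

lemma pt_diagonal_Int_Times:
  "pt_diagonal X \<inter> (A \<times> B) = (\<lambda>p. (p, p)) ` (pt_carrier X \<inter> A \<inter> B)"
  by (auto simp: pt_diagonal_def)

lemma pt_diagonal_fst_preimage:
  "{z \<in> pt_diagonal X. fst z \<in> W} = (\<lambda>p. (p, p)) ` (pt_carrier X \<inter> W)"
  by (auto simp: pt_diagonal_def)

lemma pe_fibre_product_eq:
  "pe_fibre_product X T T' = kification (subtopology (prod_topology T T') (pt_diagonal X))"
  by (simp add: pe_fibre_product_def pt_diagonal_def)

lemma closedin_pt_diagonal:
  assumes T1: "pointed_open_extension X T1" and T2: "pointed_open_extension X T2"
    and X: "locally_compact_space X" "Hausdorff_space X"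
  shows "closedin (prod_topology T1 T2) (pt_diagonal X)"
    (is "closedin ?P ?D")
proof -
  have top: "topspace ?P = pt_carrier X \<times> pt_carrier X"
    using T1 T2 by (simp add: pointed_open_extension_def)
  have "\<exists>W. openin ?P W \<and> z \<in> W \<and> W \<subseteq> topspace ?P - ?D" if z: "z \<in> topspace ?P - ?D" for z
  proof -
    obtain p q where "z = (p, q)" "p \<in> pt_carrier X" "q \<in> pt_carrier X" "p \<noteq> q"
      using z top by (auto simp: pt_diagonal_def)
    then obtain U V where "openin T1 U" "openin T2 V" "p \<in> U" "q \<in> V" "disjnt U V"
      using pointed_open_extension_separates[OF T1 T2 X] by metis
    moreover have "U \<times> V \<subseteq> topspace ?P"
      using \<open>openin T1 U\<close> \<open>openin T2 V\<close> by (simp add: openin_subset Sigma_mono)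
    ultimately show ?thesis
      using \<open>z = (p, q)\<close>
      by (intro exI[of _ "U \<times> V"]) (auto simp: openin_prod_Times_iff disjnt_def pt_diagonal_def)
  qed
  moreover have "?D \<subseteq> topspace ?P"
    using top by (auto simp: pt_diagonal_def)
  ultimately show ?thesis
    unfolding closedin_def by (subst openin_subopen) blast
qed

lemma topspace_pt_diagonal_subtopology:
  assumes "pointed_extension X T" "pointed_extension X T'"
  shows "topspace (subtopology (prod_topology T T') (pt_diagonal X)) = pt_diagonal X"
  using assms by (auto simp: pointed_extension_topspace pt_diagonal_def)

lemma continuous_map_fst_pt_diagonal:
  assumes T: "pointed_extension X T" and T': "pointed_extension X T'"
    and U: "openin T U" and U': "openin T' U'" and UU': "U \<inter> U' = {None}"
  shows "continuous_map (subtopology (prod_topology T T') (pt_diagonal X)) (pe_plus X) fst"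
    (is "continuous_map ?S _ _")
  unfolding continuous_map_def
proof (intro conjI allI impI)
  have top_T': "topspace T' = pt_carrier X"
    using T' by (rule pointed_extension_topspace)
  note top_S = topspace_pt_diagonal_subtopology[OF T T']
  have open_S: "openin ?S (pt_diagonal X \<inter> (A \<times> B))" if "openin T A" "openin T' B" for A B
    using that by (intro openin_subtopology_Int2) (simp add: openin_prod_Times_iff)
  show "fst \<in> topspace ?S \<rightarrow> topspace (pe_plus X)"
    by (auto simp: top_S pt_diagonal_def)
  fix W
  assume W: "openin (pe_plus X) W"
  have "W - {None} = Some ` {x. Some x \<in> W}"
    by (auto simp: image_iff) (metis option.exhaust)
  then have "openin T (W - {None})"
    using W openin_pointed_extension_Some_iff[OF T] by (simp add: openin_pe_plus)
  then have open_away: "openin ?S (pt_diagonal X \<inter> ((W - {None}) \<times> topspace T'))"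
    by (simp add: open_S)
  show "openin ?S {z \<in> topspace ?S. fst z \<in> W}"
  proof (cases "None \<in> W")
    case True
    have "pt_carrier X \<inter> W
        = pt_carrier X \<inter> (W - {None}) \<inter> topspace T' \<union> pt_carrier X \<inter> U \<inter> U'"
      using True UU' by (auto simp: top_T' pt_carrier_def)
    then have "{z \<in> topspace ?S. fst z \<in> W}
        = pt_diagonal X \<inter> ((W - {None}) \<times> topspace T') \<union> pt_diagonal X \<inter> (U \<times> U')"
      by (simp only: top_S pt_diagonal_Int_Times pt_diagonal_fst_preimage image_Un)
    then show ?thesis
      using open_away open_S[OF U U'] by (simp add: openin_Un)
  next
    case False
    have "pt_carrier X \<inter> W = pt_carrier X \<inter> (W - {None}) \<inter> topspace T'"
      using False by (auto simp: top_T')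
    then have "{z \<in> topspace ?S. fst z \<in> W} = pt_diagonal X \<inter> ((W - {None}) \<times> topspace T')"
      by (simp only: top_S pt_diagonal_Int_Times pt_diagonal_fst_preimage)
    then show ?thesis
      using open_away by simp
  qed
qed

lemma pe_disjointI:
  assumes T: "pointed_extension X T" and T': "pointed_extension X T'"
    and X: "locally_compact_space X"
    and U: "openin T U" and U': "openin T' U'" and UU': "U \<inter> U' = {None}"
  shows "pe_disjoint X T T'"
proof -
  define S where "S = subtopology (prod_topology T T') (pt_diagonal X)"
  have "continuous_map (pe_plus X) S (\<lambda>p. (p, p))"
    using continuous_map_pe_plus_id[OF T] continuous_map_pe_plus_id[OF T']
    by (auto simp: S_def continuous_map_in_subtopology continuous_map_paired pt_diagonal_def id_def)
  then have hom: "homeomorphic_map (pe_plus X) S (\<lambda>p. (p, p))"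
    using continuous_map_fst_pt_diagonal[OF T T' U U' UU'] topspace_pt_diagonal_subtopology[OF T T']
    unfolding homeomorphic_map_maps homeomorphic_maps_def S_def
    by (intro exI[of _ fst]) (auto simp: pt_diagonal_def)
  have "k_space S"
    using homeomorphic_k_space[OF homeomorphic_map_imp_homeomorphic_space[OF hom]]
      locally_compact_imp_k_space[OF locally_compact_space_pe_plus[OF X]] by simp
  then have "kification S = S"
    by (simp add: kification_eq_self)
  then show ?thesis
    using hom by (simp add: pe_disjoint_def pe_fibre_product_eq S_def)
qed

lemma pe_disjoint_isolated_base:
  assumes "pe_disjoint X T T'"
  shows "openin (pe_fibre_product X T T') {(None, None)}"
proof -
  have "openin (pe_plus X) {None}"
    by (simp add: openin_pe_plus pt_carrier_def)
  then show ?thesis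
    using assms homeomorphic_map_openness[of "pe_plus X" _ "\<lambda>p. (p, p)" "{None}"]
    by (simp add: pe_disjoint_def openin_subset pt_carrier_def)
qed

lemma compactin_slice_pe_disjoint:
  assumes T: "pointed_extension X T" and N: "pointed_extension X N"
    and X: "locally_compact_space X" and disj: "pe_disjoint X T N"
    and C: "compactin T (insert None C)" "None \<notin> C" and K: "compactin N K"
  shows "compactin N (K \<inter> C)"
proof -
  define S where "S = subtopology (prod_topology T N) (pt_diagonal X)"
  define D where "D = (insert None C \<times> K) \<inter> pt_diagonal X"
  \<comment> \<open>D is compact and (None, None) is isolated in it, so D minus that point is still compact.\<close>
  have "closedin (prod_topology T N) (pt_diagonal X)"
    using closedin_pt_diagonal pointed_extension_imp_pointed_open_extension T N X
      pointed_extension_Hausdorff_base by blast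
  then have "compactin (prod_topology T N) D"
    unfolding D_def using C K by (simp add: compactin_Times compact_Int_closedin)
  then have D_cpt: "compactin S D"
    by (simp add: S_def compactin_subtopology D_def)
  then have top_D: "topspace (subtopology S D) = D"
    by (simp add: compactin_subset_topspace Int_absorb1)
  have "openin (kification S) {(None, None)}"
    using pe_disjoint_isolated_base[OF disj] by (simp add: pe_fibre_product_eq S_def)
  then have "openin (subtopology S D) (D \<inter> {(None, None)})"
    using D_cpt unfolding openin_kification by blast
  then have "closedin (subtopology S D) (D - {(None, None)})"
    unfolding closedin_def top_D by (simp add: Diff_Diff_Int)
  then have "compactin S (D - {(None, None)})"
    using D_cpt closedin_compact_space compact_space_subtopology compactin_subtopology by blast
  then have "compactin N (snd ` (D - {(None, None)}))"
    unfolding S_def compactin_subtopology using continuous_map_snd image_compactin by blast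
  moreover have "C \<subseteq> pt_carrier X"
    using compactin_subset_topspace[OF C(1)] T pointed_extension_topspace by blast
  then have "snd ` (D - {(None, None)}) = K \<inter> C"
    using \<open>None \<notin> C\<close> by (force simp: D_def pt_diagonal_def)
  ultimately show ?thesis
    by simp
qed

lemma closedin_of_compactin_pe_disjoint:
  assumes T: "pointed_extension X T" and N: "pointed_extension X N"
    and X: "locally_compact_space X" and disj: "pe_disjoint X T N"
    and C: "compactin T (insert None C)" "None \<notin> C"
  shows "closedin N C"
proof -
  have "C \<subseteq> topspace N"
    using compactin_subset_topspace[OF C(1)] T N by (simp add: pointed_extension_topspace)
  moreover have "closedin (subtopology N K) (K \<inter> C)" if "compactin N K" for K
  proof -
    have "closedin N (K \<inter> C)"
      using compactin_slice_pe_disjoint[OF T N X disj C that] N compactin_imp_closedin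
      by (auto simp: pointed_extension_def)
    then show ?thesis
      by (metis closedin_subtopology inf_commute inf_left_idem)
  qed
  ultimately show ?thesis
    using N unfolding pointed_extension_def k_space by blast
qed

lemma pe_le_of_closed_compactin:
  assumes T: "pointed_extension X T" and T': "pointed_extension X T'" and N: "pointed_extension X N"
    and X: "locally_compact_space X" and disj: "pe_disjoint X T N"
    and cpt: "\<And>C. closedin T' C \<Longrightarrow> None \<notin> C \<Longrightarrow> compactin T (insert None C)"
  shows "pe_le N T'"
  unfolding pe_le_def continuous_map_closedin
proof (intro conjI allI impI)
  have top: "topspace N = pt_carrier X" "topspace T' = pt_carrier X"
    using N T' by (simp_all add: pointed_extension_topspace)
  then show "id \<in> topspace N \<rightarrow> topspace T'"
    by simp
  fix C
  assume C: "closedin T' C"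
  have "closedin N C"
  proof (cases "None \<in> C")
    case True
    have "openin T' (topspace T' - C)"
      using C by blast
    then have "openin N (topspace T' - C)"
      using True T' N openin_pointed_extension_transfer by blast
    then show ?thesis
      using closedin_subset[OF C] top by (simp add: closedin_def double_diff)
  next
    case False
    then show ?thesis
      using closedin_of_compactin_pe_disjoint[OF T N X disj cpt[OF C]] by blast
  qed
  moreover have "{x \<in> topspace N. id x \<in> C} = C"
    using closedin_subset[OF C] top by auto
  ultimately show "closedin N {x \<in> topspace N. id x \<in> C}"
    by simp
qed

lemma pe_le_antisym:
  assumes "pointed_extension X N" "pointed_extension X N'" "pe_le N N'" "pe_le N' N"
  shows "N = N'"
proof -
  have "topspace N = topspace N'"
    using assms(1,2) by (simp add: pointed_extension_topspace)
  then have "homeomorphic_map N N' id"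
    using assms(3,4) unfolding pe_le_def homeomorphic_map_maps homeomorphic_maps_def by auto
  then show ?thesis
    by simp
qed

lemma is_negation_unique:
  assumes "is_negation X T N" "is_negation X T N'"
  shows "N = N'"
  using assms pe_le_antisym unfolding is_negation_def by blast

lemma pe_neg_eqI:
  "is_negation X T N \<Longrightarrow> pe_neg X T = N"
  unfolding pe_neg_def using is_negation_unique by blast

lemma well_pointed_of_mutual_negation:
  assumes "is_negation X T N" "is_negation X N T"
  shows "well_pointed X T"
  using assms pe_neg_eqI[OF assms(1)] pe_neg_eqI[OF assms(2)]
  unfolding well_pointed_def is_negation_def by auto

section \<open>Collapse quotients\<close>

definition collapse_map :: "'a set \<Rightarrow> 'a \<Rightarrow> 'a option" where
  "collapse_map L x = (if x \<in> L then None else Some x)"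

lemma openin_collapse_quot:
  "openin (collapse_quot Xb L R) U \<longleftrightarrow>
     U \<subseteq> insert None (Some ` (topspace Xb - R - L)) \<and>
     openin (subtopology Xb (topspace Xb - R)) {x \<in> topspace Xb - R. collapse_map L x \<in> U}"
  using istopology_preimage_open[of "insert None (Some ` (topspace Xb - R - L))"
      "subtopology Xb (topspace Xb - R)" "topspace Xb - R" "collapse_map L"]
  unfolding collapse_quot_def collapse_map_def by simp

lemma topspace_collapse_quot [simp]:
  "topspace (collapse_quot Xb L R) = insert None (Some ` (topspace Xb - R - L))"
proof (rule antisym)
  show "topspace (collapse_quot Xb L R) \<subseteq> insert None (Some ` (topspace Xb - R - L))"
    using openin_collapse_quot[of Xb L R "topspace (collapse_quot Xb L R)"] by simp
  have "{x \<in> topspace Xb - R. collapse_map L x \<in> insert None (Some ` (topspace Xb - R - L))}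
      = topspace (subtopology Xb (topspace Xb - R))"
    by (auto simp: collapse_map_def)
  then have "openin (collapse_quot Xb L R) (insert None (Some ` (topspace Xb - R - L)))"
    by (simp only: openin_collapse_quot openin_topspace subset_refl simp_thms)
  then show "insert None (Some ` (topspace Xb - R - L)) \<subseteq> topspace (collapse_quot Xb L R)"
    by (rule openin_subset)
qed

lemma continuous_map_collapse_map:
  "continuous_map (subtopology Xb (topspace Xb - R)) (collapse_quot Xb L R) (collapse_map L)"
  unfolding continuous_map_def
proof (intro conjI allI impI)
  show "collapse_map L \<in> topspace (subtopology Xb (topspace Xb - R)) \<rightarrow> topspace (collapse_quot Xb L R)"
    by (auto simp: collapse_map_def)
  fix U
  assume "openin (collapse_quot Xb L R) U"
  then show "openin (subtopology Xb (topspace Xb - R))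
      {x \<in> topspace (subtopology Xb (topspace Xb - R)). collapse_map L x \<in> U}"
    unfolding openin_collapse_quot by (simp add: Int_absorb1)
qed

locale collapse_pair =
  fixes Xb :: "'a topology" and L R :: "'a set"
  assumes compact: "compact_space Xb" and Hausdorff: "Hausdorff_space Xb"
    and closed_L: "closedin Xb L" and closed_R: "closedin Xb R" and disjoint: "disjnt L R"
begin

abbreviation X :: "'a topology" where
  "X \<equiv> subtopology Xb (topspace Xb - (L \<union> R))"

lemma swap: "collapse_pair Xb R L"
  using compact Hausdorff closed_L closed_R disjoint
  by unfold_locales (simp_all add: disjnt_sym)

lemma topspace_X: "topspace X = topspace Xb - (L \<union> R)"
  by (simp add: Int_absorb1)

lemma openin_complement_R: "openin Xb (topspace Xb - R)"
  using closed_R by blast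

lemma openin_X_iff: "openin X U \<longleftrightarrow> openin Xb U \<and> U \<subseteq> topspace Xb - (L \<union> R)"
  using closed_L closed_R by (simp add: openin_open_subtopology closedin_Un openin_diff)

lemma locally_compact_space_X: "locally_compact_space X"
  using closed_L closed_R Hausdorff compact_imp_locally_compact_space[OF compact]
  by (intro locally_compact_space_open_subset) (auto simp: closedin_Un openin_diff)

lemma openin_collapse_quot_Some:
  assumes "openin X U"
  shows "openin (collapse_quot Xb L R) (Some ` U)"
proof -
  have U: "openin Xb U" "U \<subseteq> topspace Xb - (L \<union> R)"
    using assms openin_X_iff by auto
  then have "{x \<in> topspace Xb - R. collapse_map L x \<in> Some ` U} = U"
    by (auto simp: collapse_map_def)
  moreover have "openin (subtopology Xb (topspace Xb - R)) U"
    using U openin_complement_R by (auto simp: openin_open_subtopology)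
  moreover have "Some ` U \<subseteq> insert None (Some ` (topspace Xb - R - L))"
    using U(2) by auto
  ultimately show ?thesis
    unfolding openin_collapse_quot by simp
qed

lemma openin_collapse_quot_base:
  assumes A: "openin Xb A" "L \<subseteq> A"
  shows "openin (collapse_quot Xb L R) (insert None (Some ` (A - R - L)))"
proof -
  have "A \<subseteq> topspace Xb"
    using A(1) by (rule openin_subset)
  then have "{x \<in> topspace Xb - R. collapse_map L x \<in> insert None (Some ` (A - R - L))} = A - R"
    using A(2) by (auto simp: collapse_map_def)
  moreover have "openin (subtopology Xb (topspace Xb - R)) (A - R)"
    using A(1) closed_R openin_complement_R \<open>A \<subseteq> topspace Xb\<close>
    by (auto simp: openin_open_subtopology openin_diff)
  moreover have "insert None (Some ` (A - R - L)) \<subseteq> insert None (Some ` (topspace Xb - R - L))"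
    using \<open>A \<subseteq> topspace Xb\<close> by auto
  ultimately show ?thesis
    unfolding openin_collapse_quot by simp
qed

lemma compactin_collapse_quot_image:
  assumes "compactin Xb K" "K \<inter> R = {}"
  shows "compactin (collapse_quot Xb L R) (collapse_map L ` K)"
proof -
  have "K \<subseteq> topspace Xb - R"
    using assms compactin_subset_topspace by blast
  then have "compactin (subtopology Xb (topspace Xb - R)) K"
    using assms(1) by (simp add: compactin_subtopology)
  then show ?thesis
    using continuous_map_collapse_map by (rule image_compactin)
qed

lemma separating_open_sets:
  obtains A B where "openin Xb A" "openin Xb B" "L \<subseteq> A" "R \<subseteq> B" "disjnt A B"
  using compact_Hausdorff_or_regular_imp_normal_space[OF compact] Hausdorff
    closed_L closed_R disjoint
  unfolding normal_space_def by meson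

lemma closedin_collapse_quot_Some:
  assumes "compactin X K"
  shows "closedin (collapse_quot Xb L R) (Some ` K)"
proof -
  have K: "closedin Xb K" "K \<subseteq> topspace Xb - (L \<union> R)"
    using assms Hausdorff compactin_imp_closedin by (auto simp: compactin_subtopology)
  let ?V = "topspace (collapse_quot Xb L R) - Some ` K"
  have "{x \<in> topspace Xb - R. collapse_map L x \<in> ?V} = topspace Xb - R - K"
    using K(2) by (auto simp: collapse_map_def)
  moreover have "openin (subtopology Xb (topspace Xb - R)) (topspace Xb - R - K)"
    using K(1) openin_complement_R by (simp add: openin_open_subtopology openin_diff)
  ultimately have "openin (collapse_quot Xb L R) ?V"
    unfolding openin_collapse_quot by simp
  moreover have "Some ` K \<subseteq> topspace (collapse_quot Xb L R)"
    using K(2) by auto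
  ultimately show ?thesis
    by (simp add: closedin_def)
qed

lemma pointed_open_extension_collapse_quot: "pointed_open_extension X (collapse_quot Xb L R)"
  unfolding pointed_open_extension_def
  using openin_collapse_quot_Some closedin_collapse_quot_Some
  by (auto simp: pt_carrier_def topspace_X set_diff_eq)

lemma Hausdorff_space_collapse_quot: "Hausdorff_space (collapse_quot Xb L R)"
  using pointed_open_extension_collapse_quot locally_compact_space_X
    Hausdorff_space_subtopology[OF Hausdorff]
  by (rule Hausdorff_space_pointed_open_extension)

lemma collapse_quot_base_compact_nbhd:
  "\<exists>U K. openin (collapse_quot Xb L R) U \<and> compactin (collapse_quot Xb L R) K \<and> None \<in> U \<and> U \<subseteq> K"
proof -
  obtain A B where AB: "openin Xb A" "openin Xb B" "L \<subseteq> A" "R \<subseteq> B" "disjnt A B"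
    by (rule separating_open_sets)
  have "compactin Xb (topspace Xb - B)"
    using AB(2) compact closedin_compact_space by blast
  then have "compactin (collapse_quot Xb L R) (collapse_map L ` (topspace Xb - B))"
    using AB(4) by (intro compactin_collapse_quot_image) auto
  then have "compactin (collapse_quot Xb L R) ({None} \<union> collapse_map L ` (topspace Xb - B))"
    by (intro compactin_Un) auto
  moreover have "Some ` (A - R - L) \<subseteq> collapse_map L ` (topspace Xb - B)"
  proof
    fix y
    assume "y \<in> Some ` (A - R - L)"
    then obtain x where "y = Some x" "x \<in> A" "x \<notin> L"
      by blast
    moreover have "x \<in> topspace Xb - B"
      using \<open>x \<in> A\<close> AB(5) openin_subset[OF AB(1)] by (auto simp: disjnt_def)
    ultimately show "y \<in> collapse_map L ` (topspace Xb - B)"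
      by (auto simp: collapse_map_def intro: image_eqI[of _ _ x])
  qed
  then have "insert None (Some ` (A - R - L)) \<subseteq> {None} \<union> collapse_map L ` (topspace Xb - B)"
    by blast
  ultimately show ?thesis
    using openin_collapse_quot_base[OF AB(1,3)]
    by (intro exI[of _ "insert None (Some ` (A - R - L))"]
        exI[of _ "{None} \<union> collapse_map L ` (topspace Xb - B)"]) auto
qed

lemma continuous_map_Some_collapse_quot: "continuous_map X (collapse_quot Xb L R) Some"
proof -
  have "subtopology (subtopology Xb (topspace Xb - R)) (topspace Xb - (L \<union> R)) = X"
    by (simp add: subtopology_subtopology Int_absorb1 Diff_mono)
  then have "continuous_map X (collapse_quot Xb L R) (collapse_map L)"
    using continuous_map_from_subtopology[OF continuous_map_collapse_map] by metis
  then show ?thesis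
    by (rule continuous_map_eq) (simp add: topspace_X collapse_map_def)
qed

lemma pointed_extension_collapse_quot: "pointed_extension X (collapse_quot Xb L R)"
proof -
  have top: "topspace (collapse_quot Xb L R) = pt_carrier X"
    by (auto simp: pt_carrier_def topspace_X)
  have "open_map X (collapse_quot Xb L R) Some"
    using openin_collapse_quot_Some by (simp add: open_map_def)
  then have "embedding_map X (collapse_quot Xb L R) Some"
    using continuous_map_Some_collapse_quot by (simp add: injective_open_imp_embedding_map)
  moreover have "locally_compact_space (collapse_quot Xb L R)"
    using locally_compact_space_pointed[OF locally_compact_space_X top
        continuous_map_Some_collapse_quot openin_collapse_quot_Some collapse_quot_base_compact_nbhd] .
  ultimately show ?thesis
    unfolding pointed_extension_def embedding_map_def
    using top Hausdorff_space_collapse_quot by (simp add: locally_compact_imp_k_space)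
qed

lemma compactin_collapse_quot_swap:
  assumes C: "closedin (collapse_quot Xb R L) C" and "None \<notin> C"
  shows "compactin (collapse_quot Xb L R) (insert None C)"
proof -
  \<comment> \<open>C misses the neighbourhood P of R, so it is the image of the compact set Xb - P.\<close>
  define W where "W = topspace (collapse_quot Xb R L) - C"
  define P where "P = {x \<in> topspace Xb - L. collapse_map R x \<in> W}"
  have "openin (collapse_quot Xb R L) W"
    unfolding W_def using C by (rule openin_diff[OF openin_topspace])
  then have "openin (subtopology Xb (topspace Xb - L)) P"
    unfolding P_def openin_collapse_quot by blast
  then have "openin Xb P"
    using closed_L openin_trans_full by blast
  have "R \<subseteq> P"
    using closedin_subset[OF closed_R] disjoint \<open>None \<notin> C\<close>
    by (auto simp: P_def W_def collapse_map_def disjnt_def)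
  define Q where "Q = topspace Xb - P"
  have "closedin Xb Q"
    using \<open>openin Xb P\<close> by (auto simp: Q_def)
  then have "compactin Xb Q"
    using compact closedin_compact_space by blast
  then have "compactin (collapse_quot Xb L R) (collapse_map L ` Q)"
    using \<open>R \<subseteq> P\<close> by (intro compactin_collapse_quot_image) (auto simp: Q_def)
  moreover have "insert None (collapse_map L ` Q) = insert None C"
    using closedin_subset[OF C] \<open>R \<subseteq> P\<close>
    by (auto simp: Q_def P_def W_def collapse_map_def image_iff)
  ultimately show ?thesis
    by (metis compactin_Un insert_is_Un compactin_sing insertI1 topspace_collapse_quot)
qed

lemma is_negation_collapse_quot: "is_negation X (collapse_quot Xb L R) (collapse_quot Xb R L)"
proof -
  interpret swapped: collapse_pair Xb R L
    by (rule swap)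
  have T: "pointed_extension X (collapse_quot Xb L R)"
    by (rule pointed_extension_collapse_quot)
  have T': "pointed_extension X (collapse_quot Xb R L)"
    using swapped.pointed_extension_collapse_quot by (simp add: Un_commute)
  obtain A B where AB: "openin Xb A" "openin Xb B" "L \<subseteq> A" "R \<subseteq> B" "disjnt A B"
    by (rule separating_open_sets)
  have "insert None (Some ` (A - R - L)) \<inter> insert None (Some ` (B - L - R)) = {None}"
    using AB(5) by (auto simp: disjnt_def)
  then have disj: "pe_disjoint X (collapse_quot Xb L R) (collapse_quot Xb R L)"
    by (rule pe_disjointI[OF T T' locally_compact_space_X openin_collapse_quot_base[OF AB(1,3)]
          swapped.openin_collapse_quot_base[OF AB(2,4)]])
  have "pe_le N (collapse_quot Xb R L)"
    if "pointed_extension X N" "pe_disjoint X (collapse_quot Xb L R) N" for N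
    by (rule pe_le_of_closed_compactin[OF T T' that(1) locally_compact_space_X that(2)
          compactin_collapse_quot_swap])
  with T' disj show ?thesis
    by (simp add: is_negation_def)
qed

end

theorem mainTheorem13:
  fixes Xb :: "'a topology" and L R :: "'a set"
  assumes "compact_space Xb" and "Hausdorff_space Xb"
    and "closedin Xb L" and "closedin Xb R" and "disjnt L R"
  defines "X \<equiv> subtopology Xb (topspace Xb - (L \<union> R))"
  shows "well_pointed X (collapse_quot Xb L R) \<and> well_pointed X (collapse_quot Xb R L) \<and>
         is_negation X (collapse_quot Xb L R) (collapse_quot Xb R L) \<and>
         is_negation X (collapse_quot Xb R L) (collapse_quot Xb L R)"
proof -
  interpret collapse_pair Xb L R
    using assms by unfold_locales
  interpret swapped: collapse_pair Xb R L
    by (rule swap)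
  have "is_negation X (collapse_quot Xb L R) (collapse_quot Xb R L)"
    using is_negation_collapse_quot by (simp add: X_def)
  moreover have "is_negation X (collapse_quot Xb R L) (collapse_quot Xb L R)"
    using swapped.is_negation_collapse_quot by (simp add: X_def Un_commute)
  ultimately show ?thesis
    using well_pointed_of_mutual_negation by blast
qed

end
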